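(* Let $A$ be a finite-dimensional semisimple Hopf algebra over $k$, $G$ a finite group acting on $A$ by Hopf automorphisms, and $K=A\natural k^G$. For every finite-dimensional $K$-module $M$ and every positive integer $m$, $$\nu^K_m(M)=\sum_{x\in G,\ x^m=1}\nu^A_{m,x^{-1}}(M_x).$$
   Context: $k$ is algebraically closed of characteristic $0$. $k^G$ has basis $\{p_x\}_{x\in G}$ with $p_xp_y=\delta_{x,y}p_x$. The smash coproduct $K=A\natural k^G$ is $A\otimes k^G$ (elements written $a\natural p_x$) with tensor product algebra structure, comultiplication $\Delta(a\natural p_x)=\sum_{y\in G}(a_1\natural p_y)\otimes((y^{-1}\cdot a_2)\natural p_{y^{-1}x})$, counit $\varepsilon(a\natural p_x)=\delta_{1,x}\varepsilon(a)$, antipode $S(a\natural p_x)=(x^{-1}\cdot S(a))\natural p_{x^{-1}}$. Let $\Lambda_A$ be the normalized integral of $A$ ($\varepsilon(\Lambda_A)=1$); then $\Lambda_K=\Lambda_A\natural p_1$ is the normalized integral of $K$. For a $K$-module $M$, $M_x=p_x\cdot M$ (where $p_x$ means $1\natural p_x$), a $K$-submodule, $M=\bigoplus_x M_x$, and each $M_x$ is an $A$-module by restriction. Hopf powers: $h^{[m]}=\sum h_1\cdots h_m$ and, for a Hopf automorphism $\tau$, $h^{[m,\tau]}=\sum h_1(\tau\cdot h_2)\cdots(\tau^{m-1}\cdot h_m)$. Indicators: for a $K$-module $V$ with character $\chi_V$, $\nu^K_m(V)=\chi_V(\Lambda_K^{[m]})$; for an $A$-module $W$ with character $\chi_W$ and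 $x\in G$ whose order divides $m$, $\nu^A_{m,x}(W)=\chi_W(\Lambda_A^{[m,x]})$. *)

theory Defs
  imports "Jordan_Normal_Form.Matrix" "HOL-Algebra.Group" "HOL-Computational_Algebra.Polynomial"
begin

text \<open>A finite-dimensional algebra over the field 'k with basis indexed by the finite
  type 'b; elements are coefficient vectors 'b => 'k.  Tensors of two elements are
  coefficient functions on pairs of basis indices.\<close>

record ('b, 'k) hopf_sc =
  mulc    :: "'b \<Rightarrow> 'b \<Rightarrow> 'b \<Rightarrow> 'k"   (* e_i e_j = sum_l mulc i j l e_l *)
  unitc   :: "'b \<Rightarrow> 'k"                  (* 1 = sum_i unitc i e_i *)
  comulc  :: "'b \<Rightarrow> 'b \<Rightarrow> 'b \<Rightarrow> 'k"   (* Delta e_i = sum comulc i j l e_j (x) e_l *)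
  counitc :: "'b \<Rightarrow> 'k"
  antipc  :: "'b \<Rightarrow> 'b \<Rightarrow> 'k"          (* S e_i = sum_j antipc i j e_j *)

definition bv :: "'b \<Rightarrow> 'b \<Rightarrow> 'k::zero_neq_one" where
  "bv i = (\<lambda>j. if j = i then 1 else 0)"

definition hmul :: "('b::finite, 'k::field) hopf_sc \<Rightarrow> ('b \<Rightarrow> 'k) \<Rightarrow> ('b \<Rightarrow> 'k) \<Rightarrow> ('b \<Rightarrow> 'k)" where
  "hmul H u v = (\<lambda>l. \<Sum>i\<in>UNIV. \<Sum>j\<in>UNIV. u i * v j * mulc H i j l)"

definition hunit :: "('b::finite, 'k::field) hopf_sc \<Rightarrow> ('b \<Rightarrow> 'k)" where
  "hunit H = unitc H"

definition hcomul :: "('b::finite, 'k::field) hopf_sc \<Rightarrow> ('b \<Rightarrow> 'k) \<Rightarrow> ('b \<times> 'b \<Rightarrow> 'k)" where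
  "hcomul H u = (\<lambda>(j, l). \<Sum>i\<in>UNIV. u i * comulc H i j l)"

definition hcounit :: "('b::finite, 'k::field) hopf_sc \<Rightarrow> ('b \<Rightarrow> 'k) \<Rightarrow> 'k" where
  "hcounit H u = (\<Sum>i\<in>UNIV. u i * counitc H i)"

definition hantip :: "('b::finite, 'k::field) hopf_sc \<Rightarrow> ('b \<Rightarrow> 'k) \<Rightarrow> ('b \<Rightarrow> 'k)" where
  "hantip H u = (\<lambda>j. \<Sum>i\<in>UNIV. u i * antipc H i j)"

definition tmul :: "('b::finite, 'k::field) hopf_sc \<Rightarrow> ('b \<times> 'b \<Rightarrow> 'k) \<Rightarrow> ('b \<times> 'b \<Rightarrow> 'k) \<Rightarrow> ('b \<times> 'b \<Rightarrow> 'k)" where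
  "tmul H s t = (\<lambda>(a, b). \<Sum>a1\<in>UNIV. \<Sum>b1\<in>UNIV. \<Sum>a2\<in>UNIV. \<Sum>b2\<in>UNIV.
      s (a1, b1) * t (a2, b2) * mulc H a1 a2 a * mulc H b1 b2 b)"

definition hopf_algebra :: "('b::finite, 'k::field) hopf_sc \<Rightarrow> bool" where
  "hopf_algebra H \<longleftrightarrow>
     (\<forall>u v w. hmul H (hmul H u v) w = hmul H u (hmul H v w)) \<and>
     (\<forall>u. hmul H (hunit H) u = u \<and> hmul H u (hunit H) = u) \<and>
     (\<forall>i a b c. (\<Sum>p\<in>UNIV. comulc H i p c * comulc H p a b) = (\<Sum>p\<in>UNIV. comulc H i a p * comulc H p b c)) \<and>
     (\<forall>i l. (\<Sum>j\<in>UNIV. counitc H j * comulc H i j l) = bv i l) \<and>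
     (\<forall>i j. (\<Sum>l\<in>UNIV. comulc H i j l * counitc H l) = bv i j) \<and>
     (\<forall>u v. hcomul H (hmul H u v) = tmul H (hcomul H u) (hcomul H v)) \<and>
     hcomul H (hunit H) = (\<lambda>(a, b). unitc H a * unitc H b) \<and>
     (\<forall>u v. hcounit H (hmul H u v) = hcounit H u * hcounit H v) \<and>
     hcounit H (hunit H) = 1 \<and>
     (\<forall>u l. (\<Sum>a\<in>UNIV. \<Sum>b\<in>UNIV. hcomul H u (a, b) * hmul H (hantip H (bv a)) (bv b) l) = hcounit H u * hunit H l) \<and>
     (\<forall>u l. (\<Sum>a\<in>UNIV. \<Sum>b\<in>UNIV. hcomul H u (a, b) * hmul H (bv a) (hantip H (bv b)) l) = hcounit H u * hunit H l)"

text \<open>Semisimplicity: the left regular module is semisimple, i.e. every left ideal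
  has a complementary left ideal.\<close>
definition left_ideal :: "('b::finite, 'k::field) hopf_sc \<Rightarrow> ('b \<Rightarrow> 'k) set \<Rightarrow> bool" where
  "left_ideal H I \<longleftrightarrow> (\<lambda>j. 0) \<in> I \<and> (\<forall>u\<in>I. \<forall>v\<in>I. (\<lambda>j. u j + v j) \<in> I) \<and>
     (\<forall>c u. u \<in> I \<longrightarrow> (\<lambda>j. c * u j) \<in> I) \<and> (\<forall>a u. u \<in> I \<longrightarrow> hmul H a u \<in> I)"

definition semisimple :: "('b::finite, 'k::field) hopf_sc \<Rightarrow> bool" where
  "semisimple H \<longleftrightarrow> (\<forall>I. left_ideal H I \<longrightarrow>
     (\<exists>J. left_ideal H J \<and> I \<inter> J = {\<lambda>j. 0} \<and> (\<forall>v. \<exists>a\<in>I. \<exists>b\<in>J. v = (\<lambda>j. a j + b j))))"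

definition norm_integral :: "('b::finite, 'k::field) hopf_sc \<Rightarrow> ('b \<Rightarrow> 'k)" where
  "norm_integral H = (THE L. (\<forall>a. hmul H a L = (\<lambda>j. hcounit H a * L j)) \<and>
                            (\<forall>a. hmul H L a = (\<lambda>j. hcounit H a * L j)) \<and> hcounit H L = 1)"

text \<open>Iterated comultiplication Delta^(m-1) : H -> H^(x)m, tensors indexed by lists of length m;
  convention Delta^(m) = (id (x) Delta^(m-1)) o Delta.\<close>
primrec itcom :: "('b::finite, 'k::field) hopf_sc \<Rightarrow> nat \<Rightarrow> ('b \<Rightarrow> 'k) \<Rightarrow> 'b list \<Rightarrow> 'k" where
  "itcom H 0 u = (\<lambda>xs. if xs = [] then hcounit H u else 0)"
| "itcom H (Suc m) u = (\<lambda>xs. case xs of [] \<Rightarrow> 0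
      | i # ys \<Rightarrow> (if m = 0 then (if ys = [] then u i else 0)
                   else itcom H m (\<lambda>b. hcomul H u (i, b)) ys))"

text \<open>tprod H tau k [i_1,...,i_r] = tau^k(e_i1) tau^(k+1)(e_i2) ... tau^(k+r-1)(e_ir).\<close>
fun tprod :: "('b::finite, 'k::field) hopf_sc \<Rightarrow> (('b \<Rightarrow> 'k) \<Rightarrow> ('b \<Rightarrow> 'k)) \<Rightarrow> nat \<Rightarrow> 'b list \<Rightarrow> ('b \<Rightarrow> 'k)" where
  "tprod H \<tau> k [] = hunit H"
| "tprod H \<tau> k (i # ys) = hmul H ((\<tau> ^^ k) (bv i)) (tprod H \<tau> (Suc k) ys)"

text \<open>Twisted Hopf power h^[m,tau] = sum h_1 (tau h_2) ... (tau^(m-1) h_m).\<close>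
definition hpow_tw :: "('b::finite, 'k::field) hopf_sc \<Rightarrow> (('b \<Rightarrow> 'k) \<Rightarrow> ('b \<Rightarrow> 'k)) \<Rightarrow> nat \<Rightarrow> ('b \<Rightarrow> 'k) \<Rightarrow> ('b \<Rightarrow> 'k)" where
  "hpow_tw H \<tau> m u = (\<lambda>l. \<Sum>xs\<in>{xs. length xs = m}. itcom H m u xs * tprod H \<tau> 0 xs l)"

definition hpow :: "('b::finite, 'k::field) hopf_sc \<Rightarrow> nat \<Rightarrow> ('b \<Rightarrow> 'k) \<Rightarrow> ('b \<Rightarrow> 'k)" where
  "hpow H m u = hpow_tw H id m u"

text \<open>A module of dimension n is given by the matrices rho c of the basis elements.\<close>
definition rep_of :: "nat \<Rightarrow> ('c::finite \<Rightarrow> 'k::field mat) \<Rightarrow> ('c \<Rightarrow> 'k) \<Rightarrow> 'k mat" where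
  "rep_of n \<rho> u = mat n n (\<lambda>(r, s). \<Sum>c\<in>UNIV. u c * \<rho> c $$ (r, s))"

definition is_module :: "('b::finite, 'k::field) hopf_sc \<Rightarrow> nat \<Rightarrow> ('b \<Rightarrow> 'k mat) \<Rightarrow> bool" where
  "is_module H n \<rho> \<longleftrightarrow> (\<forall>c. \<rho> c \<in> carrier_mat n n) \<and> rep_of n \<rho> (hunit H) = 1\<^sub>m n \<and>
     (\<forall>u v. rep_of n \<rho> (hmul H u v) = rep_of n \<rho> u * rep_of n \<rho> v)"

definition mtrace :: "'k::comm_ring_1 mat \<Rightarrow> 'k" where
  "mtrace M = (\<Sum>i<dim_row M. M $$ (i, i))"

definition character :: "nat \<Rightarrow> ('c::finite \<Rightarrow> 'k::field mat) \<Rightarrow> ('c \<Rightarrow> 'k) \<Rightarrow> 'k" where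
  "character n \<rho> u = mtrace (rep_of n \<rho> u)"

text \<open>Indicators nu_m(V) = chi_V(Lambda^[m]) and nu_{m,tau}(W) = chi_W(Lambda^[m,tau]).\<close>
definition indicator :: "('b::finite, 'k::field) hopf_sc \<Rightarrow> nat \<Rightarrow> nat \<Rightarrow> ('b \<Rightarrow> 'k mat) \<Rightarrow> 'k" where
  "indicator H m n \<rho> = character n \<rho> (hpow H m (norm_integral H))"

definition tw_indicator :: "('b::finite, 'k::field) hopf_sc \<Rightarrow> (('b \<Rightarrow> 'k) \<Rightarrow> ('b \<Rightarrow> 'k)) \<Rightarrow> nat \<Rightarrow> nat \<Rightarrow> ('b \<Rightarrow> 'k mat) \<Rightarrow> 'k" where
  "tw_indicator H \<tau> m n \<rho> = character n \<rho> (hpow_tw H \<tau> m (norm_integral H))"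

text \<open>The action of g is the linear map with matrix alpha g: g . e_i = sum_j alpha g i j e_j.\<close>
definition actv :: "('g \<Rightarrow> 'b::finite \<Rightarrow> 'b \<Rightarrow> 'k::field) \<Rightarrow> 'g \<Rightarrow> ('b \<Rightarrow> 'k) \<Rightarrow> ('b \<Rightarrow> 'k)" where
  "actv \<alpha> g u = (\<lambda>j. \<Sum>i\<in>UNIV. u i * \<alpha> g i j)"

definition hopf_auto :: "('b::finite, 'k::field) hopf_sc \<Rightarrow> (('b \<Rightarrow> 'k) \<Rightarrow> ('b \<Rightarrow> 'k)) \<Rightarrow> bool" where
  "hopf_auto H f \<longleftrightarrow> bij f \<and>
     (\<forall>u v. f (hmul H u v) = hmul H (f u) (f v)) \<and> f (hunit H) = hunit H \<and>
     (\<forall>u. hcomul H (f u) = (\<lambda>(a, b). \<Sum>c\<in>UNIV. \<Sum>d\<in>UNIV. hcomul H u (c, d) * f (bv c) a * f (bv d) b)) \<and>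
     (\<forall>u. hcounit H (f u) = hcounit H u)"

definition hopf_action :: "('g, 'z) monoid_scheme \<Rightarrow> ('b::finite, 'k::field) hopf_sc \<Rightarrow> ('g \<Rightarrow> 'b \<Rightarrow> 'b \<Rightarrow> 'k) \<Rightarrow> bool" where
  "hopf_action G H \<alpha> \<longleftrightarrow> (\<forall>x\<in>carrier G. hopf_auto H (actv \<alpha> x)) \<and>
     actv \<alpha> \<one>\<^bsub>G\<^esub> = id \<and>
     (\<forall>x\<in>carrier G. \<forall>y\<in>carrier G. actv \<alpha> (x \<otimes>\<^bsub>G\<^esub> y) = actv \<alpha> x \<circ> actv \<alpha> y)"

text \<open>The smash coproduct K = A # k^G, with basis e_i # p_x.\<close>
definition smash :: "('b::finite, 'k::field) hopf_sc \<Rightarrow> ('g, 'z) monoid_scheme \<Rightarrow> ('g \<Rightarrow> 'b \<Rightarrow> 'b \<Rightarrow> 'k)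
    \<Rightarrow> ('b \<times> 'g, 'k) hopf_sc" where
  "smash H G \<alpha> = \<lparr>
     mulc = (\<lambda>(i, x) (j, y) (l, z). if x = y \<and> y = z then mulc H i j l else 0),
     unitc = (\<lambda>(i, x). unitc H i),
     comulc = (\<lambda>(i, x) (j, y) (l, z).
        if z = inv\<^bsub>G\<^esub> y \<otimes>\<^bsub>G\<^esub> x then (\<Sum>b\<in>UNIV. comulc H i j b * actv \<alpha> (inv\<^bsub>G\<^esub> y) (bv b) l) else 0),
     counitc = (\<lambda>(i, x). if x = \<one>\<^bsub>G\<^esub> then counitc H i else 0),
     antipc = (\<lambda>(i, x) (j, y). if y = inv\<^bsub>G\<^esub> x then actv \<alpha> (inv\<^bsub>G\<^esub> x) (hantip H (bv i)) j else 0) \<rparr>"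

text \<open>The elements p_x = 1 # p_x and a # 1 of K.\<close>
definition pK :: "('b::finite, 'k::field) hopf_sc \<Rightarrow> 'g \<Rightarrow> ('b \<times> 'g \<Rightarrow> 'k)" where
  "pK H x = (\<lambda>(i, y). if y = x then unitc H i else 0)"

definition aK :: "('b \<Rightarrow> 'k) \<Rightarrow> ('b \<times> 'g \<Rightarrow> 'k)" where
  "aK a = (\<lambda>(i, y). a i)"

definition alg_closed :: "'k::field itself \<Rightarrow> bool" where
  "alg_closed _ \<longleftrightarrow> (\<forall>p :: 'k poly. degree p > 0 \<longrightarrow> (\<exists>z. poly p z = 0))"

end

theory Submission
  imports Defs
begin

text \<open>Since \<open>A\<close> is semisimple it has a normalized integral \<open>\<Lambda>\<close> (a complement of the augmentation
  ideal is spanned by a left integral, and semisimplicity forces a normalized left integral to be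
  two-sided), and \<open>\<Lambda> \<natural> p\<^sub>1\<close> is the normalized integral of \<open>K\<close>. In \<open>K\<close> the coproduct
  pairs \<open>p\<^sub>y\<close> with \<open>p\<^bsub>y\<^sup>-\<^sup>1x\<^esub>\<close> and acts by \<open>y\<^sup>-\<^sup>1\<close> on the second factor; iterating, the
  \<open>p\<^sub>y\<close>-component of \<open>(\<Lambda> \<natural> p\<^sub>1)\<^bsup>[m]\<^esup>\<close> vanishes unless \<open>y\<^sup>m = 1\<close> and otherwise equals
  \<open>\<Lambda>\<^bsup>[m,y\<^sup>-\<^sup>1]\<^esup> \<natural> p\<^sub>y\<close>. Finally \<open>\<chi>\<^sub>M(a \<natural> p\<^sub>y) = tr(\<rho>(a) \<rho>(p\<^sub>y))\<close>, and as \<open>\<rho>(p\<^sub>y)\<close> is an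
  idempotent with image \<open>M\<^sub>y\<close>, on which \<open>a\<close> acts through the \<open>A\<close>-module structure of \<open>M\<^sub>y\<close>,
  this trace is \<open>\<chi>\<^bsub>M\<^sub>y\<^esub>(a)\<close>.\<close>

section \<open>Linear maps on coefficient vectors\<close>

lemma sum_UNIV_pair:
  "(\<Sum>p\<in>(UNIV::('a::finite \<times> 'c::finite) set). f p) = (\<Sum>a\<in>UNIV. \<Sum>c\<in>UNIV. f (a, c))"
  by (simp add: sum.cartesian_product)

lemma bv_mult [simp]:
  "(c::'k::field) * bv i j = (if j = i then c else 0)"
  "bv i j * c = (if j = i then c else 0)"
  by (simp_all add: bv_def)

lemma sum_bv_expand: "(\<lambda>l. \<Sum>i\<in>UNIV. u i * bv i l) = (u :: 'b::finite \<Rightarrow> 'k::field)"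
  by (auto intro!: ext)

definition coord_linear :: "(('b::finite \<Rightarrow> 'k::field) \<Rightarrow> ('x \<Rightarrow> 'k)) \<Rightarrow> bool" where
  "coord_linear F \<longleftrightarrow> (\<forall>u. F u = (\<lambda>l. \<Sum>i\<in>UNIV. u i * F (bv i) l))"

lemma coord_linearD: "coord_linear F \<Longrightarrow> F u = (\<lambda>l. \<Sum>i\<in>UNIV. u i * F (bv i) l)"
  unfolding coord_linear_def by (erule spec)

lemma coord_linearI: "(\<And>u. F u = (\<lambda>l. \<Sum>i\<in>UNIV. u i * F (bv i) l)) \<Longrightarrow> coord_linear F"
  unfolding coord_linear_def by blast

lemma coord_linear_sum:
  assumes "coord_linear F"
  shows "F (\<lambda>b. \<Sum>s\<in>S. f s * v s b) = (\<lambda>l. \<Sum>s\<in>S. f s * F (v s) l)"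
proof -
  have "F (\<lambda>b. \<Sum>s\<in>S. f s * v s b) = (\<lambda>l. \<Sum>i\<in>UNIV. (\<Sum>s\<in>S. f s * v s i) * F (bv i) l)"
    by (rule coord_linearD[OF assms])
  also have "\<dots> = (\<lambda>l. \<Sum>s\<in>S. f s * (\<Sum>i\<in>UNIV. v s i * F (bv i) l))"
    by (rule ext) (simp only: sum_distrib_left sum_distrib_right mult.assoc, subst sum.swap[where B=S], rule refl)
  also have "\<dots> = (\<lambda>l. \<Sum>s\<in>S. f s * F (v s) l)"
    by (subst (2) coord_linearD[OF assms]) (rule refl)
  finally show ?thesis .
qed

lemma coord_linear_zero:
  assumes "coord_linear F"
  shows "F (\<lambda>_. 0) = (\<lambda>_. 0)"
proof -
  have "F (\<lambda>_. 0) = (\<lambda>l. \<Sum>i\<in>UNIV. 0 * F (bv i) l)" by (rule coord_linearD[OF assms])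
  then show ?thesis by simp
qed

lemma coord_linear_comp:
  assumes "coord_linear F" "coord_linear G"
  shows "coord_linear (F \<circ> G)"
proof (rule coord_linearI)
  fix u
  have "(F \<circ> G) u = F (\<lambda>b. \<Sum>i\<in>UNIV. u i * G (bv i) b)"
    by (simp add: coord_linearD[OF assms(2), of u, symmetric])
  then show "(F \<circ> G) u = (\<lambda>l. \<Sum>i\<in>UNIV. u i * (F \<circ> G) (bv i) l)"
    by (simp add: coord_linear_sum[OF assms(1)])
qed

lemma coord_linear_funpow:
  fixes F :: "('b::finite \<Rightarrow> 'k::field) \<Rightarrow> ('b \<Rightarrow> 'k)"
  assumes "coord_linear F"
  shows "coord_linear (F ^^ k)"
proof (induction k)
  case 0
  show ?case by (rule coord_linearI) (simp add: sum_bv_expand)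
next
  case (Suc k)
  then show ?case using coord_linear_comp[OF assms Suc.IH] by (simp only: funpow.simps)
qed

lemma coord_linear_actv: "coord_linear (actv \<alpha> g)"
  by (rule coord_linearI) (simp add: actv_def)

lemma hmul_sum_right:
  "hmul H a (\<lambda>l. \<Sum>s\<in>S. f s * v s l) = (\<lambda>l. \<Sum>s\<in>S. f s * hmul H a (v s) l)"
  unfolding hmul_def
  apply (rule ext)
  apply (simp add: sum_distrib_left sum_distrib_right)
  apply (subst sum.swap[where A=S], rule sum.cong[OF refl])
  apply (subst sum.swap[where A=S], (rule sum.cong[OF refl])+)
  by (simp add: ac_simps)

lemma hmul_sum_left:
  "hmul H (\<lambda>l. \<Sum>s\<in>S. f s * v s l) a = (\<lambda>l. \<Sum>s\<in>S. f s * hmul H (v s) a l)"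
  unfolding hmul_def
  apply (rule ext)
  apply (simp add: sum_distrib_left sum_distrib_right)
  apply (subst sum.swap[where A=S], rule sum.cong[OF refl])
  apply (subst sum.swap[where A=S], (rule sum.cong[OF refl])+)
  by (simp add: ac_simps)

lemma coord_linear_hmul_right: "coord_linear (hmul H a)"
proof (rule coord_linearI)
  fix u
  show "hmul H a u = (\<lambda>l. \<Sum>i\<in>UNIV. u i * hmul H a (bv i) l)"
    by (subst (1) sum_bv_expand[of u, symmetric]) (rule hmul_sum_right)
qed

lemma coord_linear_hmul_left: "coord_linear (\<lambda>u. hmul H u a)"
proof (rule coord_linearI)
  fix u
  show "hmul H u a = (\<lambda>l. \<Sum>i\<in>UNIV. u i * hmul H (bv i) a l)"
    by (subst (1) sum_bv_expand[of u, symmetric]) (rule hmul_sum_left)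
qed

lemma hmul_zero_left: "hmul H (\<lambda>_. 0) a = (\<lambda>_. 0)"
  using coord_linear_zero[OF coord_linear_hmul_left] .

lemma hmul_zero_right: "hmul H a (\<lambda>_. 0) = (\<lambda>_. 0)"
  using coord_linear_zero[OF coord_linear_hmul_right] .

lemma hmul_scale_right: "hmul H a (\<lambda>j. c * u j) = (\<lambda>j. c * hmul H a u j)"
  by (simp add: hmul_def sum_distrib_left ac_simps)

lemma hmul_scale_left: "hmul H (\<lambda>j. c * u j) a = (\<lambda>j. c * hmul H u a j)"
  by (simp add: hmul_def sum_distrib_left ac_simps)

lemma hmul_add_right: "hmul H a (\<lambda>j. u j + v j) = (\<lambda>j. hmul H a u j + hmul H a v j)"
  by (simp add: hmul_def sum.distrib algebra_simps)

lemma hcounit_add: "hcounit H (\<lambda>j. u j + v j) = hcounit H u + hcounit H v"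
  by (simp add: hcounit_def sum.distrib algebra_simps)

lemma hcounit_zero: "hcounit H (\<lambda>_. 0) = 0"
  by (simp add: hcounit_def)

lemma hcounit_scale: "hcounit H (\<lambda>j. c * u j) = c * hcounit H u"
  by (simp add: hcounit_def sum_distrib_left ac_simps)

lemma hopf_algebra_hmul_hunit:
  "hopf_algebra H \<Longrightarrow> hmul H u (hunit H) = u"
  unfolding hopf_algebra_def by blast

lemma hopf_algebra_hmul_assoc:
  "hopf_algebra H \<Longrightarrow> hmul H (hmul H u v) w = hmul H u (hmul H v w)"
  unfolding hopf_algebra_def by blast

lemma hopf_algebra_hcounit_hmul:
  "hopf_algebra H \<Longrightarrow> hcounit H (hmul H u v) = hcounit H u * hcounit H v"
  unfolding hopf_algebra_def by blast

lemma hopf_algebra_hcounit_hunit: "hopf_algebra H \<Longrightarrow> hcounit H (hunit H) = 1"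
  unfolding hopf_algebra_def by blast

section \<open>Twisted Hopf powers\<close>

lemma itcom_linear: "itcom H m u xs = (\<Sum>c\<in>UNIV. u c * itcom H m (bv c) xs)"
proof (induction m arbitrary: u xs)
  case 0
  then show ?case by (simp add: hcounit_def sum_distrib_left)
next
  case (Suc m)
  show ?case
  proof (cases "xs = [] \<or> m = 0")
    case True
    then show ?thesis by (cases xs) auto
  next
    case False
    then obtain i ys where xs: "xs = i # ys" and m: "m \<noteq> 0" by (cases xs) auto
    have "itcom H (Suc m) u xs = itcom H m (\<lambda>b. hcomul H u (i, b)) ys" using xs m by simp
    also have "\<dots> = (\<Sum>b\<in>UNIV. hcomul H u (i, b) * itcom H m (bv b) ys)" using Suc.IH by blast
    also have "\<dots> = (\<Sum>c\<in>UNIV. u c * (\<Sum>b\<in>UNIV. hcomul H (bv c) (i, b) * itcom H m (bv b) ys))"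
      by (simp add: hcomul_def sum_distrib_left sum_distrib_right mult.assoc) (rule sum.swap)
    also have "\<dots> = (\<Sum>c\<in>UNIV. u c * itcom H m (\<lambda>b. hcomul H (bv c) (i, b)) ys)"
      by (simp only: Suc.IH[symmetric])
    finally show ?thesis using xs m by simp
  qed
qed

lemma sum_lists_length_Suc:
  "(\<Sum>xs\<in>{xs::'b::finite list. length xs = Suc m}. f xs) = (\<Sum>i\<in>UNIV. \<Sum>ys\<in>{ys. length ys = m}. f (i # ys))"
proof -
  have lists: "{xs::'b list. length xs = Suc m} = (\<lambda>(i, ys). i # ys) ` (UNIV \<times> {ys. length ys = m})"
    by (auto simp: length_Suc_conv image_def)
  have inj: "inj_on (\<lambda>(i, ys). i # ys) (UNIV \<times> {ys::'b list. length ys = m})"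
    by (auto simp: inj_on_def)
  show ?thesis
    unfolding lists sum.reindex[OF inj] sum.cartesian_product by (rule sum.cong) auto
qed

text \<open>After the first tensor factor, the rest of \<open>h\<^bsup>[m+1,\<tau>]\<^esup>\<close> is a twisted power whose
  twisting starts at \<open>\<tau>\<^sup>1\<close> instead of \<open>\<tau>\<^sup>0\<close>; the offset \<open>k\<close> makes the recursion possible.\<close>

definition hpow_tw_from ::
    "('b::finite, 'k::field) hopf_sc \<Rightarrow> (('b \<Rightarrow> 'k) \<Rightarrow> ('b \<Rightarrow> 'k)) \<Rightarrow> nat \<Rightarrow> nat \<Rightarrow> ('b \<Rightarrow> 'k) \<Rightarrow> ('b \<Rightarrow> 'k)" where
  "hpow_tw_from H \<tau> k m u = (\<lambda>l. \<Sum>xs\<in>{xs. length xs = m}. itcom H m u xs * tprod H \<tau> k xs l)"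

lemma hpow_tw_eq_from: "hpow_tw H \<tau> m u = hpow_tw_from H \<tau> 0 m u"
  by (simp add: hpow_tw_def hpow_tw_from_def)

lemma coord_linear_hpow_tw_from: "coord_linear (hpow_tw_from H \<tau> k m)"
proof (rule coord_linearI)
  fix u
  show "hpow_tw_from H \<tau> k m u = (\<lambda>l. \<Sum>i\<in>UNIV. u i * hpow_tw_from H \<tau> k m (bv i) l)"
    unfolding hpow_tw_from_def
    by (rule ext, subst itcom_linear)
      (simp add: sum_distrib_left sum_distrib_right mult.assoc, rule sum.swap)
qed

lemma hpow_tw_from_Suc_0:
  "hpow_tw_from H \<tau> k (Suc 0) u = (\<lambda>l. \<Sum>i\<in>UNIV. u i * hmul H ((\<tau> ^^ k) (bv i)) (hunit H) l)"
  unfolding hpow_tw_from_def sum_lists_length_Suc by simp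

lemma hpow_tw_from_Suc:
  assumes "m \<noteq> 0"
  shows "hpow_tw_from H \<tau> k (Suc m) u =
    (\<lambda>l. \<Sum>i\<in>UNIV. hmul H ((\<tau> ^^ k) (bv i)) (hpow_tw_from H \<tau> (Suc k) m (\<lambda>b. hcomul H u (i, b))) l)"
  unfolding hpow_tw_from_def sum_lists_length_Suc using assms
  by (simp add: hmul_sum_right)

lemma hpow_tw_from_id_shift: "hpow_tw_from H id k m = hpow_tw_from H id 0 m"
proof -
  have shift: "tprod H id j xs = tprod H id 0 xs" for j xs
    by (induction xs arbitrary: j) (simp_all, metis tprod.simps(2) id_funpow)
  show ?thesis unfolding hpow_tw_from_def by (simp only: shift[of k])
qed

lemma funpow_Suc_on_basis:
  assumes "coord_linear \<tau>"
  shows "(\<lambda>l. \<Sum>i\<in>UNIV. \<tau> (bv c) i * (\<tau> ^^ k) (bv i) l) = (\<tau> ^^ Suc k) (bv c)"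
  using coord_linearD[OF coord_linear_funpow[OF assms, of k], of "\<tau> (bv c)"]
  by (simp add: funpow_Suc_right del: funpow.simps)

lemma hcomul_hopf_auto_slice:
  assumes "hopf_auto H \<tau>"
  shows "(\<lambda>b. hcomul H (\<tau> w) (i, b)) =
    (\<lambda>b. \<Sum>p\<in>UNIV. (hcomul H w p * \<tau> (bv (fst p)) i) * \<tau> (bv (snd p)) b)"
  using assms unfolding hopf_auto_def by (auto simp: sum_UNIV_pair mult.assoc)

text \<open>Since \<open>\<tau>\<close> is a coalgebra map, \<open>\<Delta>\<^bsup>(m)\<^esup>(\<tau> w) = \<tau>\<^bsup>\<otimes>m\<^esup> \<Delta>\<^bsup>(m)\<^esup>(w)\<close>, so twisting
  the argument raises every exponent of \<open>\<tau>\<close> by one.\<close>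

lemma hpow_tw_from_apply_twist:
  assumes ha: "hopf_algebra H" and au: "hopf_auto H \<tau>" and lt: "coord_linear \<tau>" and "m \<noteq> 0"
  shows "hpow_tw_from H \<tau> k m (\<tau> w) = hpow_tw_from H \<tau> (Suc k) m w"
  using assms(4)
proof (induction m arbitrary: k w)
  case 0
  then show ?case by simp
next
  case (Suc m)
  have lin_pow: "coord_linear (\<tau> ^^ j)" for j by (rule coord_linear_funpow[OF lt])
  show ?case
  proof (cases "m = 0")
    case True
    have "hpow_tw_from H \<tau> k (Suc 0) (\<tau> w) = (\<lambda>l. \<Sum>i\<in>UNIV. \<tau> w i * (\<tau> ^^ k) (bv i) l)"
      by (simp only: hpow_tw_from_Suc_0 hopf_algebra_hmul_hunit[OF ha])
    also have "\<dots> = (\<tau> ^^ Suc k) w"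
      by (simp only: coord_linearD[OF lin_pow, symmetric] funpow_Suc_right o_apply)
    also have "\<dots> = hpow_tw_from H \<tau> (Suc k) (Suc 0) w"
      by (simp only: hpow_tw_from_Suc_0 hopf_algebra_hmul_hunit[OF ha]
          coord_linearD[OF lin_pow, symmetric])
    finally show ?thesis using True by simp
  next
    case False
    define W where "W = hcomul H w"
    define T where "T = hpow_tw_from H \<tau> (Suc (Suc k)) m"
    have "hpow_tw_from H \<tau> k (Suc m) (\<tau> w) =
        (\<lambda>l. \<Sum>i\<in>UNIV. hmul H ((\<tau> ^^ k) (bv i))
          (\<lambda>l'. \<Sum>p\<in>UNIV. (W p * \<tau> (bv (fst p)) i) * T (bv (snd p)) l') l)"
      by (simp only: hpow_tw_from_Suc[OF False] hcomul_hopf_auto_slice[OF au]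
          coord_linear_sum[OF coord_linear_hpow_tw_from] Suc.IH[OF False] W_def T_def)
    also have "\<dots> = (\<lambda>l. \<Sum>p\<in>UNIV. W p *
        hmul H (\<lambda>l'. \<Sum>i\<in>UNIV. \<tau> (bv (fst p)) i * (\<tau> ^^ k) (bv i) l') (T (bv (snd p))) l)"
      by (rule ext, simp only: hmul_sum_right, subst sum.swap)
        (simp add: hmul_sum_left sum_distrib_left mult.assoc)
    also have "\<dots> = (\<lambda>l. \<Sum>c\<in>UNIV. \<Sum>d\<in>UNIV. W (c, d) * hmul H ((\<tau> ^^ Suc k) (bv c)) (T (bv d)) l)"
      by (simp add: funpow_Suc_on_basis[OF lt] sum_UNIV_pair del: funpow.simps)
    also have "\<dots> = (\<lambda>l. \<Sum>c\<in>UNIV. hmul H ((\<tau> ^^ Suc k) (bv c)) (T (\<lambda>b. \<Sum>d\<in>UNIV. W (c, d) * bv d b)) l)"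
      by (simp only: coord_linear_sum[OF coord_linear_hpow_tw_from] T_def hmul_sum_right)
    also have "\<dots> = hpow_tw_from H \<tau> (Suc k) (Suc m) w"
      by (simp only: hpow_tw_from_Suc[OF False] sum_bv_expand W_def T_def)
    finally show ?thesis .
  qed
qed

section \<open>The smash coproduct\<close>

lemma smash_hmul:
  "hmul (smash A G \<alpha>) U V (l, z) = hmul A (\<lambda>i. U (i, z)) (\<lambda>i. V (i, z)) l"
proof -
  have "(\<Sum>y\<in>UNIV. U (i, x) * V (j, y) * mulc (smash A G \<alpha>) (i, x) (j, y) (l, z)) =
      (if x = z then U (i, z) * V (j, z) * mulc A i j l else 0)" for i x j
  proof -
    have "(\<lambda>y. U (i, x) * V (j, y) * mulc (smash A G \<alpha>) (i, x) (j, y) (l, z)) =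
        (\<lambda>y. if y = z then (if x = z then U (i, z) * V (j, z) * mulc A i j l else 0) else 0)"
      by (auto simp: smash_def)
    then show ?thesis by (simp only:) simp
  qed
  then have "hmul (smash A G \<alpha>) U V (l, z) =
      (\<Sum>i\<in>UNIV. \<Sum>x\<in>UNIV. \<Sum>j\<in>UNIV. if x = z then U (i, z) * V (j, z) * mulc A i j l else 0)"
    by (simp only: hmul_def sum_UNIV_pair)
  also have "\<dots> = (\<Sum>i\<in>UNIV. \<Sum>x\<in>UNIV. if x = z then (\<Sum>j\<in>UNIV. U (i, z) * V (j, z) * mulc A i j l) else 0)"
    by (intro sum.cong refl) auto
  also have "\<dots> = hmul A (\<lambda>i. U (i, z)) (\<lambda>i. V (i, z)) l"
    by (simp add: hmul_def)
  finally show ?thesis .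
qed

lemma smash_hunit_slice: "(\<lambda>i. hunit (smash A G \<alpha>) (i, z)) = hunit A"
  by (simp add: hunit_def smash_def)

lemma smash_hmul_hunit:
  assumes "hopf_algebra A"
  shows "hmul (smash A G \<alpha>) U (hunit (smash A G \<alpha>)) = U"
  by (auto simp: smash_hmul smash_hunit_slice hopf_algebra_hmul_hunit[OF assms])

lemma smash_hmul_bv:
  fixes A :: "('b::finite, 'k::field) hopf_sc" and G :: "('g::finite, 'z) monoid_scheme"
  shows "hmul (smash A G \<alpha>) (bv (i, z)) V (l, y) = (if z = y then hmul A (bv i) (\<lambda>j. V (j, y)) l else 0)"
proof (cases "z = y")
  case True
  have "(\<lambda>i'. bv (i, y) (i', y)) = (bv i :: 'b \<Rightarrow> 'k)" by (auto simp: bv_def)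
  then show ?thesis using True by (simp add: smash_hmul)
next
  case False
  then have "(\<lambda>i'. bv (i, z) (i', y)) = (\<lambda>_. 0 :: 'k)" by (auto simp: bv_def)
  then show ?thesis using False by (simp only: smash_hmul hmul_zero_left if_False)
qed

lemma smash_hcounit: "hcounit (smash A G \<alpha>) U = hcounit A (\<lambda>i. U (i, \<one>\<^bsub>G\<^esub>))"
proof -
  have "hcounit (smash A G \<alpha>) U = (\<Sum>i\<in>UNIV. \<Sum>x\<in>UNIV. U (i, x) * (if x = \<one>\<^bsub>G\<^esub> then counitc A i else 0))"
    by (simp add: hcounit_def smash_def sum_UNIV_pair)
  also have "\<dots> = (\<Sum>i\<in>UNIV. \<Sum>x\<in>UNIV. if x = \<one>\<^bsub>G\<^esub> then U (i, x) * counitc A i else 0)"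
    by (intro sum.cong refl) simp
  also have "\<dots> = hcounit A (\<lambda>i. U (i, \<one>\<^bsub>G\<^esub>))" by (simp add: hcounit_def)
  finally show ?thesis .
qed

lemma smash_hcomul_slice:
  assumes gr: "group G" and cu: "carrier G = UNIV"
  shows "hcomul (smash A G \<alpha>) U ((i, y), (j, y [^]\<^bsub>G\<^esub> m)) =
    actv \<alpha> (inv\<^bsub>G\<^esub> y) (\<lambda>b. hcomul A (\<lambda>c. U (c, y [^]\<^bsub>G\<^esub> Suc m)) (i, b)) j"
proof -
  define x0 where "x0 = y [^]\<^bsub>G\<^esub> Suc m"
  define S where "S c = (\<Sum>b\<in>UNIV. comulc A c i b * actv \<alpha> (inv\<^bsub>G\<^esub> y) (bv b) j)" for c
  have cond: "y [^]\<^bsub>G\<^esub> m = inv\<^bsub>G\<^esub> y \<otimes>\<^bsub>G\<^esub> x \<longleftrightarrow> x = x0" for x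
    using group.inv_solve_left[OF gr, of "y [^]\<^bsub>G\<^esub> m" y x]
      monoid.nat_pow_Suc2[OF group.is_monoid[OF gr], of y m]
    by (simp add: cu x0_def)
  have "hcomul (smash A G \<alpha>) U ((i, y), (j, y [^]\<^bsub>G\<^esub> m)) =
      (\<Sum>c\<in>UNIV. \<Sum>x\<in>UNIV. U (c, x) * (if y [^]\<^bsub>G\<^esub> m = inv\<^bsub>G\<^esub> y \<otimes>\<^bsub>G\<^esub> x then S c else 0))"
    unfolding S_def by (simp add: hcomul_def smash_def sum_UNIV_pair)
  also have "\<dots> = (\<Sum>c\<in>UNIV. \<Sum>x\<in>UNIV. if x = x0 then U (c, x0) * S c else 0)"
    by (intro sum.cong refl) (simp add: cond)
  also have "\<dots> = (\<Sum>c\<in>UNIV. U (c, x0) * S c)"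
    by simp
  also have "\<dots> = actv \<alpha> (inv\<^bsub>G\<^esub> y) (\<lambda>b. hcomul A (\<lambda>c. U (c, x0)) (i, b)) j"
    unfolding S_def actv_def hcomul_def
    by (simp add: sum_distrib_left sum_distrib_right mult.assoc) (rule sum.swap)
  finally show ?thesis by (simp add: x0_def)
qed

text \<open>The central computation: each coproduct step of \<open>A \<natural> k\<^sup>G\<close> acts by \<open>y\<^sup>-\<^sup>1\<close> on the
  second factor, so the \<open>y\<close>-component of \<open>U\<^bsup>[m]\<^esup>\<close> only sees the \<open>y\<^sup>m\<close>-component of \<open>U\<close>,
  where it becomes the Hopf power of \<open>A\<close> twisted by \<open>y\<^sup>-\<^sup>1\<close>.\<close>

lemma smash_hpow_slice:
  assumes ha: "hopf_algebra A" and gr: "group G" and cu: "carrier G = UNIV"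
    and act: "hopf_action G A \<alpha>" and "m \<noteq> 0"
  shows "hpow_tw_from (smash A G \<alpha>) id 0 m U (l, y) =
    hpow_tw_from A (actv \<alpha> (inv\<^bsub>G\<^esub> y)) 0 m (\<lambda>i. U (i, y [^]\<^bsub>G\<^esub> m)) l"
  using assms(5)
proof (induction m arbitrary: U l y)
  case 0
  then show ?case by simp
next
  case (Suc m)
  define K where "K = smash A G \<alpha>"
  define \<tau> where "\<tau> = actv \<alpha> (inv\<^bsub>G\<^esub> y)"
  show ?case
  proof (cases "m = 0")
    case True
    have "y [^]\<^bsub>G\<^esub> Suc 0 = y"
      using monoid.l_one[OF group.is_monoid[OF gr], of y] cu by simp
    then show ?thesis
      using True by (simp add: hpow_tw_from_Suc_0 smash_hmul_hunit[OF ha] hopf_algebra_hmul_hunit[OF ha])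
  next
    case False
    define V where "V = (\<lambda>c. U (c, y [^]\<^bsub>G\<^esub> Suc m))"
    have au: "hopf_auto A \<tau>" using act cu unfolding hopf_action_def \<tau>_def by simp
    have lin: "coord_linear \<tau>" unfolding \<tau>_def by (rule coord_linear_actv)
    have "hpow_tw_from K id 0 (Suc m) U (l, y) =
        (\<Sum>i\<in>UNIV. \<Sum>z\<in>UNIV. hmul K (bv (i, z)) (hpow_tw_from K id 0 m (\<lambda>b. hcomul K U ((i, z), b))) (l, y))"
      by (simp only: hpow_tw_from_Suc[OF False] hpow_tw_from_id_shift[where k="Suc 0"] funpow_0
          sum_UNIV_pair)
    also have "\<dots> = (\<Sum>i\<in>UNIV. hmul A (bv i)
        (\<lambda>j. hpow_tw_from K id 0 m (\<lambda>b. hcomul K U ((i, y), b)) (j, y)) l)"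
      by (simp add: K_def smash_hmul_bv)
    also have "\<dots> = (\<Sum>i\<in>UNIV. hmul A (bv i) (hpow_tw_from A \<tau> 0 m (\<tau> (\<lambda>b. hcomul A V (i, b)))) l)"
      by (simp only: Suc.IH[OF False] K_def \<tau>_def V_def smash_hcomul_slice[OF gr cu])
    also have "\<dots> = (\<Sum>i\<in>UNIV. hmul A (bv i) (hpow_tw_from A \<tau> (Suc 0) m (\<lambda>b. hcomul A V (i, b))) l)"
      by (simp only: hpow_tw_from_apply_twist[OF ha au lin False])
    also have "\<dots> = hpow_tw_from A \<tau> 0 (Suc m) V l"
      by (simp only: hpow_tw_from_Suc[OF False] funpow_0)
    finally show ?thesis by (simp only: K_def \<tau>_def V_def)
  qed
qed

section \<open>Integrals\<close>

definition left_integral :: "('b::finite, 'k::field) hopf_sc \<Rightarrow> ('b \<Rightarrow> 'k) \<Rightarrow> bool" where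
  "left_integral H t \<longleftrightarrow> (\<forall>a. hmul H a t = (\<lambda>j. hcounit H a * t j))"

definition right_integral :: "('b::finite, 'k::field) hopf_sc \<Rightarrow> ('b \<Rightarrow> 'k) \<Rightarrow> bool" where
  "right_integral H t \<longleftrightarrow> (\<forall>a. hmul H t a = (\<lambda>j. hcounit H a * t j))"

definition normalized_integral :: "('b::finite, 'k::field) hopf_sc \<Rightarrow> ('b \<Rightarrow> 'k) \<Rightarrow> bool" where
  "normalized_integral H L \<longleftrightarrow> left_integral H L \<and> right_integral H L \<and> hcounit H L = 1"

lemma norm_integral_eq:
  assumes "normalized_integral H L"
  shows "norm_integral H = L"
  unfolding norm_integral_def
proof (rule the_equality)
  show "(\<forall>a. hmul H a L = (\<lambda>j. hcounit H a * L j)) \<and>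
      (\<forall>a. hmul H L a = (\<lambda>j. hcounit H a * L j)) \<and> hcounit H L = 1"
    using assms unfolding normalized_integral_def left_integral_def right_integral_def .
next
  fix L'
  assume L': "(\<forall>a. hmul H a L' = (\<lambda>j. hcounit H a * L' j)) \<and>
      (\<forall>a. hmul H L' a = (\<lambda>j. hcounit H a * L' j)) \<and> hcounit H L' = 1"
  have "hmul H L L' = (\<lambda>j. hcounit H L * L' j)" using L' by blast
  moreover have "hmul H L L' = (\<lambda>j. hcounit H L' * L j)"
    using assms unfolding normalized_integral_def right_integral_def by blast
  moreover have "hcounit H L = 1" "hcounit H L' = 1"
    using assms L' unfolding normalized_integral_def by blast+
  ultimately show "L' = L" by simp
qed

lemma semisimple_complement:
  assumes "semisimple H" and "left_ideal H I"
  obtains J where "left_ideal H J" "I \<inter> J = {\<lambda>j. 0}" "\<forall>v. \<exists>a\<in>I. \<exists>b\<in>J. v = (\<lambda>j. a j + b j)"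
  using assms(1)[unfolded semisimple_def, rule_format, OF assms(2)]
  by (elim exE conjE) (rule that; assumption)

lemma left_ideal_augmentation:
  assumes "hopf_algebra H"
  shows "left_ideal H {u. hcounit H u = 0}"
  unfolding left_ideal_def
  by (simp add: hcounit_add hcounit_scale hopf_algebra_hcounit_hmul[OF assms] hcounit_zero)

lemma left_integral_exists:
  assumes ha: "hopf_algebra H" and ss: "semisimple H"
  obtains f where "left_integral H f" "hcounit H f = 1"
proof -
  define I where "I = {u. hcounit H u = 0}"
  obtain J where J: "left_ideal H J" "I \<inter> J = {\<lambda>j. 0}" "\<forall>v. \<exists>a\<in>I. \<exists>b\<in>J. v = (\<lambda>j. a j + b j)"
    by (rule semisimple_complement[OF ss left_ideal_augmentation[OF ha], folded I_def])
  then have J_add: "\<And>u v. u \<in> J \<Longrightarrow> v \<in> J \<Longrightarrow> (\<lambda>j. u j + v j) \<in> J"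
    and J_scale: "\<And>u c. u \<in> J \<Longrightarrow> (\<lambda>j. c * u j) \<in> J"
    and J_mul: "\<And>u a. u \<in> J \<Longrightarrow> hmul H a u \<in> J"
    unfolding left_ideal_def by blast+
  obtain e f where ef: "e \<in> I" "f \<in> J" "hunit H = (\<lambda>j. e j + f j)" using J(3) by blast
  have f1: "hcounit H f = 1"
    using ef hopf_algebra_hcounit_hunit[OF ha] by (simp add: hcounit_add I_def)
  have "hmul H a f = (\<lambda>j. hcounit H a * f j)" for a
  proof -
    define g where "g = (\<lambda>j. hmul H a f j + (- hcounit H a) * f j)"
    have "g \<in> J" unfolding g_def by (rule J_add[OF J_mul[OF ef(2)] J_scale[OF ef(2)]])
    moreover have "g \<in> I"
      unfolding g_def I_def mem_Collect_eq
      by (simp only: hcounit_add hcounit_scale hopf_algebra_hcounit_hmul[OF ha] f1) simp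
    ultimately have "g = (\<lambda>j. 0)" using J(2) by blast
    then show ?thesis by (simp add: g_def fun_eq_iff)
  qed
  then have "left_integral H f" unfolding left_integral_def by blast
  then show ?thesis using f1 by (rule that)
qed

lemma left_ideal_span_left_integral:
  assumes "left_integral H t"
  shows "left_ideal H {v. \<exists>c. v = (\<lambda>j. c * t j)}" (is "left_ideal H ?L")
proof -
  have span: "(\<lambda>j. c * t j) \<in> ?L" for c by blast
  have "(\<lambda>j. 0) \<in> ?L" using span[of 0] by simp
  moreover have "(\<lambda>j. u j + v j) \<in> ?L" if uv: "u \<in> ?L" "v \<in> ?L" for u v
  proof -
    obtain c c' where "u = (\<lambda>j. c * t j)" "v = (\<lambda>j. c' * t j)" using uv by blast
    then show ?thesis using span[of "c + c'"] by (simp add: algebra_simps)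
  qed
  moreover have "(\<lambda>j. c * u j) \<in> ?L" if u: "u \<in> ?L" for c u
  proof -
    obtain c' where "u = (\<lambda>j. c' * t j)" using u by blast
    then show ?thesis using span[of "c * c'"] by (simp add: algebra_simps)
  qed
  moreover have "hmul H a u \<in> ?L" if u: "u \<in> ?L" for a u
  proof -
    obtain c where "u = (\<lambda>j. c * t j)" using u by blast
    then show ?thesis
      using assms span[of "c * hcounit H a"] by (simp add: left_integral_def hmul_scale_right algebra_simps)
  qed
  ultimately show ?thesis unfolding left_ideal_def by blast
qed

text \<open>In a semisimple algebra the line \<open>L\<close> spanned by a left integral \<open>t\<close> has a complement
  \<open>L'\<close>; writing \<open>1 = l + l'\<close> gives \<open>t l' \<in> L \<inter> L' = 0\<close>, hence \<open>t = t l = c t\<^sup>2 = c \<epsilon>(t) t\<close>.\<close>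

lemma left_integral_hcounit_zero:
  assumes ha: "hopf_algebra H" and ss: "semisimple H"
    and t: "left_integral H t" and t0: "hcounit H t = 0"
  shows "t = (\<lambda>_. 0)"
proof -
  define L where "L = {v. \<exists>c. v = (\<lambda>j. c * t j)}"
  have L: "left_ideal H L" unfolding L_def by (rule left_ideal_span_left_integral[OF t])
  then have L_add: "\<And>u v. u \<in> L \<Longrightarrow> v \<in> L \<Longrightarrow> (\<lambda>j. u j + v j) \<in> L"
    and L_scale: "\<And>u c. u \<in> L \<Longrightarrow> (\<lambda>j. c * u j) \<in> L"
    and L_mul: "\<And>u a. u \<in> L \<Longrightarrow> hmul H a u \<in> L"
    unfolding left_ideal_def by blast+
  obtain L' where L': "left_ideal H L'" "L \<inter> L' = {\<lambda>j. 0}" "\<forall>v. \<exists>a\<in>L. \<exists>b\<in>L'. v = (\<lambda>j. a j + b j)"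
    using semisimple_complement[OF ss L] by blast
  obtain l l' where ll: "l \<in> L" "l' \<in> L'" "hunit H = (\<lambda>j. l j + l' j)" using L'(3) by blast
  have split: "t = (\<lambda>j. hmul H t l j + hmul H t l' j)"
  proof -
    have "t = hmul H t (hunit H)" by (simp only: hopf_algebra_hmul_hunit[OF ha])
    also have "\<dots> = (\<lambda>j. hmul H t l j + hmul H t l' j)" by (simp only: ll(3) hmul_add_right)
    finally show ?thesis .
  qed
  have "t \<in> L" unfolding L_def by (rule CollectI, rule exI[of _ 1]) simp
  have "hmul H t l' = (\<lambda>j. t j + (- 1) * hmul H t l j)"
    using fun_cong[OF split] by (simp add: fun_eq_iff)
  also have "\<dots> \<in> L" by (rule L_add[OF \<open>t \<in> L\<close> L_scale[OF L_mul[OF ll(1)]]])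
  finally have "hmul H t l' \<in> L" .
  moreover have "hmul H t l' \<in> L'" using L'(1) ll(2) unfolding left_ideal_def by blast
  ultimately have "hmul H t l' = (\<lambda>j. 0)" using L'(2) by blast
  obtain c where c: "l = (\<lambda>j. c * t j)" using ll(1) unfolding L_def by blast
  have "t = hmul H t l" using split \<open>hmul H t l' = (\<lambda>j. 0)\<close> by simp
  also have "\<dots> = (\<lambda>j. c * hmul H t t j)" unfolding c by (rule hmul_scale_right)
  also have "\<dots> = (\<lambda>_. 0)" using t t0 by (simp add: left_integral_def)
  finally show ?thesis .
qed

lemma left_integral_is_right_integral:
  assumes ha: "hopf_algebra H" and ss: "semisimple H"
    and \<Lambda>: "left_integral H \<Lambda>" and \<Lambda>1: "hcounit H \<Lambda> = 1"
  shows "right_integral H \<Lambda>"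
  unfolding right_integral_def
proof
  fix a
  define t where "t = (\<lambda>j. hmul H \<Lambda> a j + (- hcounit H a) * \<Lambda> j)"
  have "hmul H b t = (\<lambda>j. hcounit H b * t j)" for b
  proof -
    have "hmul H b t = (\<lambda>j. hmul H (hmul H b \<Lambda>) a j + (- hcounit H a) * hmul H b \<Lambda> j)"
      unfolding t_def by (simp only: hmul_add_right hmul_scale_right hopf_algebra_hmul_assoc[OF ha])
    also have "\<dots> = (\<lambda>j. hcounit H b * t j)"
      using \<Lambda> unfolding left_integral_def t_def by (simp add: hmul_scale_left) (simp add: algebra_simps)
    finally show ?thesis .
  qed
  then have "left_integral H t" unfolding left_integral_def by blast
  moreover have "hcounit H t = 0"
    unfolding t_def by (simp only: hcounit_add hcounit_scale hopf_algebra_hcounit_hmul[OF ha] \<Lambda>1) simp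
  ultimately have "t = (\<lambda>_. 0)" by (rule left_integral_hcounit_zero[OF ha ss])
  then show "hmul H \<Lambda> a = (\<lambda>j. hcounit H a * \<Lambda> j)" by (auto simp: t_def fun_eq_iff)
qed

lemma normalized_integral_exists:
  assumes "hopf_algebra H" and "semisimple H"
  obtains \<Lambda> where "normalized_integral H \<Lambda>"
proof -
  obtain \<Lambda> where "left_integral H \<Lambda>" "hcounit H \<Lambda> = 1"
    by (rule left_integral_exists[OF assms])
  then show ?thesis
    using that left_integral_is_right_integral[OF assms] unfolding normalized_integral_def by blast
qed

definition smash_elem :: "('b \<Rightarrow> 'k::zero) \<Rightarrow> 'g \<Rightarrow> ('b \<times> 'g \<Rightarrow> 'k)" where
  "smash_elem v y = (\<lambda>(i, z). if z = y then v i else 0)"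

lemma smash_elem_slice: "(\<lambda>i. smash_elem v y (i, z)) = (if z = y then v else (\<lambda>_. 0))"
  by (auto simp: smash_elem_def)

lemma smash_normalized_integral:
  assumes "normalized_integral A \<Lambda>"
  shows "normalized_integral (smash A G \<alpha>) (smash_elem \<Lambda> \<one>\<^bsub>G\<^esub>)"
proof -
  have left: "hmul A a \<Lambda> = (\<lambda>j. hcounit A a * \<Lambda> j)"
    and right: "hmul A \<Lambda> a = (\<lambda>j. hcounit A a * \<Lambda> j)"
    and one: "hcounit A \<Lambda> = 1" for a
    using assms unfolding normalized_integral_def left_integral_def right_integral_def by blast+
  have "hmul (smash A G \<alpha>) U (smash_elem \<Lambda> \<one>\<^bsub>G\<^esub>) (l, z) =
      hcounit (smash A G \<alpha>) U * smash_elem \<Lambda> \<one>\<^bsub>G\<^esub> (l, z)" for U l z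
    unfolding smash_hmul smash_elem_slice smash_hcounit
    by (cases "z = \<one>\<^bsub>G\<^esub>") (simp_all add: left hmul_zero_right smash_elem_def)
  moreover have "hmul (smash A G \<alpha>) (smash_elem \<Lambda> \<one>\<^bsub>G\<^esub>) U (l, z) =
      hcounit (smash A G \<alpha>) U * smash_elem \<Lambda> \<one>\<^bsub>G\<^esub> (l, z)" for U l z
    unfolding smash_hmul smash_elem_slice smash_hcounit
    by (cases "z = \<one>\<^bsub>G\<^esub>") (simp_all add: right hmul_zero_left smash_elem_def)
  moreover have "hcounit (smash A G \<alpha>) (smash_elem \<Lambda> \<one>\<^bsub>G\<^esub>) = 1"
    unfolding smash_hcounit smash_elem_slice using one by simp
  ultimately show ?thesis
    unfolding normalized_integral_def left_integral_def right_integral_def by (simp add: fun_eq_iff)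
qed

section \<open>Traces and characters\<close>

lemma pK_apply: "pK A y (l, z) = (if z = y then hunit A l else 0)"
  by (simp add: pK_def hunit_def)

lemma pK_slice: "(\<lambda>i. pK A y (i, z)) = (if z = y then hunit A else (\<lambda>_. 0))"
  by (auto simp: pK_apply)

lemma hmul_aK_pK:
  assumes "hopf_algebra A"
  shows "hmul (smash A G \<alpha>) (aK a) (pK A y) = smash_elem a y"
proof -
  have "hmul (smash A G \<alpha>) (aK a) (pK A y) (l, z) = smash_elem a y (l, z)" for l z
    by (cases "z = y")
      (simp_all add: smash_hmul pK_slice aK_def hopf_algebra_hmul_hunit[OF assms] hmul_zero_right
        smash_elem_def)
  then show ?thesis by (simp add: fun_eq_iff)
qed

lemma hmul_pK_pK:
  assumes "hopf_algebra A"
  shows "hmul (smash A G \<alpha>) (pK A y) (pK A y) = pK A y"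
proof -
  have "hmul (smash A G \<alpha>) (pK A y) (pK A y) (l, z) = pK A y (l, z)" for l z
    by (cases "z = y")
      (simp_all add: smash_hmul pK_slice hopf_algebra_hmul_hunit[OF assms] hmul_zero_right pK_apply)
  then show ?thesis by (simp add: fun_eq_iff)
qed


lemma mtrace_mult_comm:
  assumes "A \<in> carrier_mat n m" and "B \<in> carrier_mat m n"
  shows "mtrace (A * B) = mtrace (B * A)"
proof -
  have "mtrace (A * B) = (\<Sum>i<n. \<Sum>k<m. A $$ (i, k) * B $$ (k, i))"
    using assms unfolding mtrace_def by (simp add: scalar_prod_def lessThan_atLeast0)
  also have "\<dots> = (\<Sum>k<m. \<Sum>i<n. B $$ (k, i) * A $$ (i, k))"
    by (subst sum.swap) (simp add: mult.commute)
  also have "\<dots> = mtrace (B * A)"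
    using assms unfolding mtrace_def by (simp add: scalar_prod_def lessThan_atLeast0)
  finally show ?thesis .
qed

lemma mult_unit_vec_eq_col:
  fixes P :: "'k::field mat"
  assumes "P \<in> carrier_mat n m" and "j < m"
  shows "P *\<^sub>v unit_vec m j = col P j"
  using col_mult2[OF assms(1) one_carrier_mat assms(2)] right_mult_one_mat[OF assms(1)] assms(2)
  by simp

lemma mat_factor_through_image:
  fixes P \<iota> :: "'k::field mat"
  assumes P: "P \<in> carrier_mat n m" and I: "\<iota> \<in> carrier_mat n d"
    and img: "\<And>v. v \<in> carrier_vec m \<Longrightarrow> \<exists>w \<in> carrier_vec d. P *\<^sub>v v = \<iota> *\<^sub>v w"
  obtains \<pi> where "\<pi> \<in> carrier_mat d m" and "\<iota> * \<pi> = P"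
proof -
  have "\<forall>j. \<exists>w. j < m \<longrightarrow> w \<in> carrier_vec d \<and> P *\<^sub>v unit_vec m j = \<iota> *\<^sub>v w"
    using img[OF unit_vec_carrier] by blast
  then obtain W where W: "\<And>j. j < m \<Longrightarrow> W j \<in> carrier_vec d \<and> P *\<^sub>v unit_vec m j = \<iota> *\<^sub>v W j"
    by metis
  define \<pi> where "\<pi> = mat d m (\<lambda>(r, j). W j $ r)"
  have \<pi>: "\<pi> \<in> carrier_mat d m" unfolding \<pi>_def by simp
  have "\<iota> * \<pi> = P"
  proof (rule mat_col_eqI)
    fix j assume "j < dim_col P"
    then have j: "j < m" using P by simp
    have "col \<pi> j = W j" using W[OF j] j unfolding \<pi>_def by (auto intro!: eq_vecI)
    then have "col (\<iota> * \<pi>) j = \<iota> *\<^sub>v W j" using col_mult2[OF I \<pi> j] by simp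
    also have "\<dots> = col P j" using W[OF j] mult_unit_vec_eq_col[OF P j] by simp
    finally show "col (\<iota> * \<pi>) j = col P j" .
  qed (use I \<pi> P in auto)
  with \<pi> show ?thesis by (rule that)
qed

lemma mat_left_inverse_of_injective:
  fixes \<iota> \<pi> :: "'k::field mat"
  assumes I: "\<iota> \<in> carrier_mat n d" and \<pi>: "\<pi> \<in> carrier_mat d n" and I\<pi>I: "\<iota> * \<pi> * \<iota> = \<iota>"
    and inj: "\<And>w w'. w \<in> carrier_vec d \<Longrightarrow> w' \<in> carrier_vec d \<Longrightarrow> \<iota> *\<^sub>v w = \<iota> *\<^sub>v w' \<Longrightarrow> w = w'"
  shows "\<pi> * \<iota> = 1\<^sub>m d"
proof (rule mat_col_eqI)
  fix j assume "j < dim_col (1\<^sub>m d :: 'k mat)"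
  then have j: "j < d" by simp
  have "\<iota> *\<^sub>v col (\<pi> * \<iota>) j = col (\<iota> * (\<pi> * \<iota>)) j"
    using col_mult2[OF I mult_carrier_mat[OF \<pi> I] j] by simp
  also have "\<iota> * (\<pi> * \<iota>) = \<iota>" using I \<pi> I\<pi>I by (simp add: assoc_mult_mat)
  also have "col \<iota> j = \<iota> *\<^sub>v col (1\<^sub>m d) j"
    using mult_unit_vec_eq_col[OF I j] j by simp
  finally have "\<iota> *\<^sub>v col (\<pi> * \<iota>) j = \<iota> *\<^sub>v col (1\<^sub>m d) j" .
  moreover have "col (\<pi> * \<iota>) j \<in> carrier_vec d" using \<pi> I by (simp add: carrier_vecI)
  moreover have "col (1\<^sub>m d) j \<in> carrier_vec d" by (simp add: carrier_vecI)
  ultimately show "col (\<pi> * \<iota>) j = col (1\<^sub>m d) j" using inj by blast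
qed (use I \<pi> in auto)

text \<open>Factor \<open>P = \<iota> \<pi>\<close>; idempotence and injectivity of \<open>\<iota>\<close> give \<open>\<pi> \<iota> = 1\<close>, whence
  \<open>tr(R P) = tr(\<iota> S \<pi>) = tr(S \<pi> \<iota>) = tr S\<close>.\<close>

lemma mtrace_mult_idempotent:
  fixes R P \<iota> S :: "'k::field mat"
  assumes R: "R \<in> carrier_mat n n" and P: "P \<in> carrier_mat n n" and I: "\<iota> \<in> carrier_mat n d"
    and S: "S \<in> carrier_mat d d" and PP: "P * P = P" and RI: "R * \<iota> = \<iota> * S"
    and inj: "\<And>w w'. w \<in> carrier_vec d \<Longrightarrow> w' \<in> carrier_vec d \<Longrightarrow> \<iota> *\<^sub>v w = \<iota> *\<^sub>v w' \<Longrightarrow> w = w'"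
    and img: "{P *\<^sub>v v | v. v \<in> carrier_vec n} = {\<iota> *\<^sub>v w | w. w \<in> carrier_vec d}"
  shows "mtrace (R * P) = mtrace S"
proof -
  have "\<exists>w \<in> carrier_vec d. P *\<^sub>v v = \<iota> *\<^sub>v w" if "v \<in> carrier_vec n" for v
  proof -
    have "P *\<^sub>v v \<in> {\<iota> *\<^sub>v w | w. w \<in> carrier_vec d}" unfolding img[symmetric] using that by auto
    then show ?thesis by auto
  qed
  then obtain \<pi> where \<pi>: "\<pi> \<in> carrier_mat d n" and I\<pi>: "\<iota> * \<pi> = P"
    by (rule mat_factor_through_image[OF P I])
  have "P * \<iota> = \<iota>"
  proof (rule mat_col_eqI)
    fix j assume "j < dim_col \<iota>"
    then have j: "j < d" using I by simp
    have "\<iota> *\<^sub>v unit_vec d j \<in> {P *\<^sub>v v | v. v \<in> carrier_vec n}"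
      unfolding img by auto
    then obtain v where v: "v \<in> carrier_vec n" "col \<iota> j = P *\<^sub>v v"
      using mult_unit_vec_eq_col[OF I j] by auto
    have "col (P * \<iota>) j = P *\<^sub>v (P *\<^sub>v v)" using col_mult2[OF P I j] v(2) by simp
    also have "\<dots> = (P * P) *\<^sub>v v" using P v by (simp add: assoc_mult_mat_vec)
    also have "\<dots> = col \<iota> j" using PP v(2) by simp
    finally show "col (P * \<iota>) j = col \<iota> j" .
  qed (use I P in auto)
  then have "\<iota> * \<pi> * \<iota> = \<iota>" by (simp only: I\<pi>)
  then have \<pi>I: "\<pi> * \<iota> = 1\<^sub>m d" by (rule mat_left_inverse_of_injective[OF I \<pi> _ inj])
  have "mtrace (R * P) = mtrace (R * \<iota> * \<pi>)" using R I \<pi> I\<pi> by (simp add: assoc_mult_mat)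
  also have "\<dots> = mtrace (\<iota> * (S * \<pi>))" using RI I S \<pi> by (simp add: assoc_mult_mat)
  also have "\<dots> = mtrace (S * \<pi> * \<iota>)" by (rule mtrace_mult_comm) (use I S \<pi> in auto)
  also have "\<dots> = mtrace S" using \<pi>I S I \<pi> by (simp add: assoc_mult_mat)
  finally show ?thesis .
qed


lemma character_expand: "character n \<rho> U = (\<Sum>r<n. \<Sum>c\<in>UNIV. U c * \<rho> c $$ (r, r))"
  unfolding character_def mtrace_def rep_of_def by (intro sum.cong) auto

lemma character_linear:
  "character n \<rho> (U :: 'c::finite \<Rightarrow> 'k::field) = (\<Sum>c\<in>UNIV. U c * character n \<rho> (bv c))"
  unfolding character_expand
  by (simp add: sum_distrib_left) (subst sum.swap, simp add: mult.assoc)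

lemma character_zero: "character n \<rho> (\<lambda>_. 0 :: 'k::field) = 0"
  by (simp add: character_expand)

lemma character_sum_slices:
  "character n \<rho> (U :: 'b::finite \<times> 'g::finite \<Rightarrow> 'k::field) =
    (\<Sum>y\<in>UNIV. character n \<rho> (smash_elem (\<lambda>i. U (i, y)) y))"
proof -
  have "(\<Sum>y\<in>UNIV. character n \<rho> (smash_elem (\<lambda>i. U (i, y)) y)) =
      (\<Sum>y\<in>UNIV. \<Sum>i\<in>UNIV. \<Sum>x\<in>UNIV. smash_elem (\<lambda>i. U (i, y)) y (i, x) * character n \<rho> (bv (i, x)))"
    by (subst character_linear) (simp only: sum_UNIV_pair)
  also have "\<dots> = (\<Sum>y\<in>UNIV. \<Sum>i\<in>UNIV. U (i, y) * character n \<rho> (bv (i, y)))"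
  proof -
    have "smash_elem v y (i, x) * c = (if x = y then v i * c else 0)" for v :: "'b \<Rightarrow> 'k" and y :: 'g and i x c
      by (simp add: smash_elem_def)
    then show ?thesis by simp
  qed
  also have "\<dots> = character n \<rho> U"
    by (subst sum.swap) (simp only: character_linear[of n \<rho> U] sum_UNIV_pair)
  finally show ?thesis by simp
qed

lemma character_smash_elem:
  assumes ha: "hopf_algebra A"
    and modK: "is_module (smash A G \<alpha>) n \<rho>"
    and I: "\<iota> \<in> carrier_mat n d"
    and inj: "\<And>w w'. w \<in> carrier_vec d \<Longrightarrow> w' \<in> carrier_vec d \<Longrightarrow> \<iota> *\<^sub>v w = \<iota> *\<^sub>v w' \<Longrightarrow> w = w'"
    and img: "{rep_of n \<rho> (pK A y) *\<^sub>v v | v. v \<in> carrier_vec n} = {\<iota> *\<^sub>v w | w. w \<in> carrier_vec d}"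
    and intertw: "\<And>a. rep_of n \<rho> (aK a) * \<iota> = \<iota> * rep_of d \<sigma> a"
  shows "character n \<rho> (smash_elem a y) = character d \<sigma> a"
proof -
  have mult: "rep_of n \<rho> (hmul (smash A G \<alpha>) u v) = rep_of n \<rho> u * rep_of n \<rho> v" for u v
    using modK unfolding is_module_def by blast
  have carrier: "rep_of n' \<rho>' u \<in> carrier_mat n' n'" for n' \<rho>' u
    by (simp add: rep_of_def)
  have "rep_of n \<rho> (pK A y) * rep_of n \<rho> (pK A y) = rep_of n \<rho> (pK A y)"
    using mult[of "pK A y" "pK A y"] unfolding hmul_pK_pK[OF ha] by (rule sym)
  then have "mtrace (rep_of n \<rho> (aK a) * rep_of n \<rho> (pK A y)) = mtrace (rep_of d \<sigma> a)"
    by (rule mtrace_mult_idempotent[OF carrier carrier I carrier _ intertw inj img])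
  then show ?thesis
    unfolding character_def hmul_aK_pK[OF ha, where G=G and \<alpha>=\<alpha>, symmetric] mult .
qed

theorem theorem4p1:
  fixes A :: "('b::finite, 'k::field_char_0) hopf_sc"
    and G :: "('g::finite, 'z) monoid_scheme"
    and \<alpha> :: "'g \<Rightarrow> 'b \<Rightarrow> 'b \<Rightarrow> 'k"
    and n :: nat and \<rho> :: "'b \<times> 'g \<Rightarrow> 'k mat"
    and d :: "'g \<Rightarrow> nat" and \<sigma> :: "'g \<Rightarrow> 'b \<Rightarrow> 'k mat" and \<iota> :: "'g \<Rightarrow> 'k mat"
    and m :: nat
  assumes "alg_closed TYPE('k)"
    and "hopf_algebra A" and "semisimple A"
    and "group G" and "carrier G = UNIV"
    and "hopf_action G A \<alpha>"
    and "is_module (smash A G \<alpha>) n \<rho>"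
    and "\<And>x. is_module A (d x) (\<sigma> x)"
    and "\<And>x. \<iota> x \<in> carrier_mat n (d x)"
    and "\<And>x w w'. w \<in> carrier_vec (d x) \<Longrightarrow> w' \<in> carrier_vec (d x) \<Longrightarrow> \<iota> x *\<^sub>v w = \<iota> x *\<^sub>v w' \<Longrightarrow> w = w'"
    and "\<And>x. {rep_of n \<rho> (pK A x) *\<^sub>v v | v. v \<in> carrier_vec n} = {\<iota> x *\<^sub>v w | w. w \<in> carrier_vec (d x)}"
    and "\<And>x a. rep_of n \<rho> (aK a) * \<iota> x = \<iota> x * rep_of (d x) (\<sigma> x) a"
    and "m > 0"
  shows "indicator (smash A G \<alpha>) m n \<rho> =
    (\<Sum>x\<in>{x. x [^]\<^bsub>G\<^esub> m = \<one>\<^bsub>G\<^esub>}. tw_indicator A (actv \<alpha> (inv\<^bsub>G\<^esub> x)) m (d x) (\<sigma> x))"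
proof -
  obtain \<Lambda> where \<Lambda>: "normalized_integral A \<Lambda>" using normalized_integral_exists[OF assms(2,3)] .
  define P where "P = hpow (smash A G \<alpha>) m (smash_elem \<Lambda> \<one>\<^bsub>G\<^esub>)"
  have slice: "(\<lambda>i. P (i, y)) =
      (if y [^]\<^bsub>G\<^esub> m = \<one>\<^bsub>G\<^esub> then hpow_tw A (actv \<alpha> (inv\<^bsub>G\<^esub> y)) m \<Lambda> else (\<lambda>_. 0))" for y
    using smash_hpow_slice[OF assms(2,4,5,6)] \<open>m > 0\<close>
    by (simp add: P_def hpow_def hpow_tw_eq_from smash_elem_slice coord_linear_zero[OF coord_linear_hpow_tw_from])
  have "indicator (smash A G \<alpha>) m n \<rho> = (\<Sum>y\<in>UNIV. character n \<rho> (smash_elem (\<lambda>i. P (i, y)) y))"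
    unfolding indicator_def norm_integral_eq[OF smash_normalized_integral[OF \<Lambda>]] P_def
    by (rule character_sum_slices)
  also have "\<dots> = (\<Sum>y\<in>UNIV. character (d y) (\<sigma> y) (\<lambda>i. P (i, y)))"
    using character_smash_elem[OF assms(2,7,9,10,11,12)] by simp
  also have "\<dots> = (\<Sum>y\<in>UNIV. if y [^]\<^bsub>G\<^esub> m = \<one>\<^bsub>G\<^esub> then tw_indicator A (actv \<alpha> (inv\<^bsub>G\<^esub> y)) m (d y) (\<sigma> y) else 0)"
    by (intro sum.cong refl) (simp add: slice tw_indicator_def norm_integral_eq[OF \<Lambda>] character_zero)
  also have "\<dots> = (\<Sum>y\<in>{y\<in>UNIV. y [^]\<^bsub>G\<^esub> m = \<one>\<^bsub>G\<^esub>}. tw_indicator A (actv \<alpha> (inv\<^bsub>G\<^esub> y)) m (d y) (\<sigma> y))"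
    by (rule sum.inter_filter[symmetric]) simp
  finally show ?thesis by simp
qed

end
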